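(* Let $\pi\subset\mathrm{Iso}(\mathbb R^n)$ be a crystallographic group. Then $$\mathcal C_\pi=\mathrm O(n)\cdot \mathrm Z_{\mathsf{GL}(n)}(H_\pi)=\{OP: O\in\mathrm O(n),\ P\in\mathsf{GL}(n,\mathbb R),\ PA=AP\ \forall A\in H_\pi\}.$$
   Context: $\mathrm{Iso}(\mathbb R^n)=\mathrm O(n)\ltimes\mathbb R^n$ with elements $(A,v)$ acting by $x\mapsto Ax+v$; a crystallographic group is a discrete subgroup with compact quotient; $H_\pi=\{A:\exists v,\ (A,v)\in\pi\}\subset\mathrm O(n)$ is its holonomy group. $\mathcal C_\pi=\{A\in\mathsf{GL}(n,\mathbb R):AH_\pi A^{-1}\subset\mathrm O(n)\}$, and $\mathrm Z_{\mathsf{GL}(n)}(H_\pi)$ is the centralizer of $H_\pi$ in $\mathsf{GL}(n,\mathbb R)$. *)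

theory Defs
  imports "HOL-Analysis.Analysis"
begin

text \<open>Isometries of R^n as pairs (A, v), acting by x \<mapsto> A x + v.\<close>

type_synonym 'n iso = "(real^'n^'n) \<times> (real^'n)"

definition Iso :: "'n::finite iso set" where
  "Iso = {(A, v). orthogonal_matrix A}"

definition iso_apply :: "'n::finite iso \<Rightarrow> real^'n \<Rightarrow> real^'n" where
  "iso_apply g x = fst g *v x + snd g"

definition iso_mult :: "'n::finite iso \<Rightarrow> 'n iso \<Rightarrow> 'n iso" where
  "iso_mult g h = (fst g ** fst h, fst g *v snd h + snd g)"

definition iso_one :: "'n::finite iso" where
  "iso_one = (mat 1, 0)"

definition iso_inv :: "'n::finite iso \<Rightarrow> 'n iso" where
  "iso_inv g = (matrix_inv (fst g), - (matrix_inv (fst g) *v snd g))"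

definition iso_subgroup :: "'n::finite iso set \<Rightarrow> bool" where
  "iso_subgroup \<pi> \<longleftrightarrow> \<pi> \<subseteq> Iso \<and> iso_one \<in> \<pi> \<and>
     (\<forall>g\<in>\<pi>. \<forall>h\<in>\<pi>. iso_mult g h \<in> \<pi>) \<and> (\<forall>g\<in>\<pi>. iso_inv g \<in> \<pi>)"

text \<open>Discrete in the topology of Iso(R^n) \<subseteq> M_n(R) \<times> R^n.\<close>
definition discrete_set :: "'n::finite iso set \<Rightarrow> bool" where
  "discrete_set \<pi> \<longleftrightarrow> (\<forall>g\<in>\<pi>. \<exists>e>0. \<forall>h\<in>\<pi>. dist h g < e \<longrightarrow> h = g)"

definition orbit :: "'n::finite iso set \<Rightarrow> real^'n \<Rightarrow> (real^'n) set" where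
  "orbit \<pi> x = (\<lambda>g. iso_apply g x) ` \<pi>"

text \<open>Compact quotient: the orbit space \<pi>\R^n, with the quotient topology
  of the orbit map, is compact.\<close>
definition cocompact :: "'n::finite iso set \<Rightarrow> bool" where
  "cocompact \<pi> \<longleftrightarrow> (\<exists>Y. quotient_map euclidean Y (orbit \<pi>) \<and> compact_space Y)"

definition crystallographic :: "'n::finite iso set \<Rightarrow> bool" where
  "crystallographic \<pi> \<longleftrightarrow> iso_subgroup \<pi> \<and> discrete_set \<pi> \<and> cocompact \<pi>"

definition holonomy :: "'n::finite iso set \<Rightarrow> (real^'n^'n) set" where
  "holonomy \<pi> = {A. \<exists>v. (A, v) \<in> \<pi>}"

definition conj_orth :: "'n::finite iso set \<Rightarrow> (real^'n^'n) set" where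
  "conj_orth \<pi> = {A. invertible A \<and>
      (\<forall>H\<in>holonomy \<pi>. orthogonal_matrix (A ** H ** matrix_inv A))}"

definition GL_centralizer :: "(real^'n^'n) set \<Rightarrow> (real^'n^'n) set" where
  "GL_centralizer H = {P. invertible P \<and> (\<forall>A\<in>H. P ** A = A ** P)}"

end

theory Submission
  imports Defs
begin

text \<open>Only the orthogonality of the holonomy H matters. For invertible A, orthogonality of all
  A H A\<inverse> says exactly that H^T (A^T A) H = A^T A for every H. Write
  A = Q P with Q orthogonal and P the positive definite square root of A^T A (polar decomposition).
  Then H^T P H is a positive definite square root of A^T A as well, and by uniqueness of such
  roots it equals P, i.e. P commutes with H. Conversely, if P commutes with H then
  (Q P) H (Q P)\<inverse> = Q H Q^T is orthogonal. Square roots are built by induction on the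
  dimension of an invariant subspace, splitting off an eigenvector that maximises the quadratic
  form on the unit sphere.\<close>

definition posdef :: "real^'n^'n \<Rightarrow> bool" where
  "posdef M \<longleftrightarrow> transpose M = M \<and> (\<forall>x. x \<noteq> 0 \<longrightarrow> 0 < x \<bullet> (M *v x))"

lemma matrix_inv_right:
  fixes A :: "'a::field^'n^'n"
  assumes "invertible A"
  shows "A ** matrix_inv A = mat 1"
  using someI_ex[OF assms[unfolded invertible_def]] by (simp add: matrix_inv_def)

lemma matrix_inv_left:
  fixes A :: "'a::field^'n^'n"
  assumes "invertible A"
  shows "matrix_inv A ** A = mat 1"
  using matrix_inv_right[OF assms] matrix_left_right_inverse by blast

lemma matrix_inv_unique:
  fixes A B :: "'a::field^'n^'n"
  assumes "A ** B = mat 1"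
  shows "matrix_inv A = B"
proof -
  have "invertible A" using assms invertible_right_inverse by blast
  have "matrix_inv A = matrix_inv A ** (A ** B)" by (simp add: assms)
  also have "\<dots> = B" by (simp add: matrix_mul_assoc matrix_inv_left[OF \<open>invertible A\<close>])
  finally show ?thesis .
qed

lemma orthogonal_matrix_invertible:
  "orthogonal_matrix Q \<Longrightarrow> invertible Q"
  unfolding orthogonal_matrix_def invertible_def by blast

lemma orthogonal_matrix_inv:
  fixes Q :: "'a::field^'n^'n"
  shows "orthogonal_matrix Q \<Longrightarrow> matrix_inv Q = transpose Q"
  unfolding orthogonal_matrix_def by (blast intro: matrix_inv_unique)

lemma matrix_inv_mult:
  fixes A B :: "'a::field^'n^'n"
  assumes "invertible A" "invertible B"
  shows "matrix_inv (A ** B) = matrix_inv B ** matrix_inv A"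
proof (rule matrix_inv_unique)
  have "A ** B ** (matrix_inv B ** matrix_inv A) = A ** (B ** matrix_inv B) ** matrix_inv A"
    by (simp add: matrix_mul_assoc)
  then show "A ** B ** (matrix_inv B ** matrix_inv A) = mat 1"
    by (simp add: matrix_inv_right assms)
qed

lemma matrix_inv_transpose:
  fixes A :: "'a::field^'n^'n"
  assumes "invertible A"
  shows "matrix_inv (transpose A) = transpose (matrix_inv A)"
  by (rule matrix_inv_unique)
    (metis matrix_inv_left[OF assms] matrix_transpose_mul transpose_mat)

lemma inner_transpose_matrix: "x \<bullet> (transpose A *v y) = (A *v x) \<bullet> (y::real^'n)"
  by (metis dot_lmul_matrix inner_commute transpose_matrix_vector)

lemma inner_symmetric_matrix:
  fixes M :: "real^'n^'n"
  assumes "transpose M = M"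
  shows "x \<bullet> (M *v y) = (M *v x) \<bullet> y"
  by (metis assms inner_transpose_matrix)

lemma symmetric_matrix_eq_0:
  fixes D :: "real^'n^'n"
  assumes sym: "transpose D = D" and z: "\<And>x. x \<bullet> (D *v x) = 0"
  shows "D = 0"
proof -
  have "y \<bullet> (D *v w) = 0" for y w
  proof -
    have "(y + w) \<bullet> (D *v (y + w)) = y \<bullet> (D *v y) + 2 * (y \<bullet> (D *v w)) + w \<bullet> (D *v w)"
      using inner_symmetric_matrix[OF sym, of w y]
      by (simp add: matrix_vector_right_distrib inner_add_left inner_add_right inner_commute)
    then show ?thesis using z by simp
  qed
  then have "D *v w = 0" for w by (metis inner_eq_zero_iff)
  then show ?thesis by (simp add: matrix_eq)
qed

lemma quadratic_form_attains_max_on_sphere: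
  fixes M :: "real^'n^'n"
  assumes S: "subspace S" and ne: "S \<noteq> {0}"
  obtains v where "v \<in> S" "v \<bullet> v = 1" "\<And>x. x \<in> S \<Longrightarrow> x \<bullet> (M *v x) \<le> (v \<bullet> (M *v v)) * (x \<bullet> x)"
proof -
  define K where "K = S \<inter> sphere 0 1"
  have "compact K" unfolding K_def using closed_subspace[OF S] by (simp add: closed_Int_compact)
  obtain x0 where "x0 \<in> S" "x0 \<noteq> 0" using ne S subspace_0 by blast
  then have "x0 /\<^sub>R norm x0 \<in> K" using S by (simp add: K_def subspace_scale)
  moreover have "continuous_on K (\<lambda>x. x \<bullet> (M *v x))" by (intro continuous_intros)
  ultimately obtain v where vK: "v \<in> K" and vmax: "\<And>y. y \<in> K \<Longrightarrow> y \<bullet> (M *v y) \<le> v \<bullet> (M *v v)"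
    using continuous_attains_sup[OF \<open>compact K\<close>] by (metis empty_iff)
  have bound: "x \<bullet> (M *v x) \<le> (v \<bullet> (M *v v)) * (x \<bullet> x)" if "x \<in> S" for x
  proof (cases "x = 0")
    case False
    define u where "u = x /\<^sub>R norm x"
    have "u \<in> K" using \<open>x \<in> S\<close> S False by (simp add: K_def u_def subspace_scale)
    moreover have "norm x *\<^sub>R u = x" using False by (simp add: u_def)
    then have "x \<bullet> (M *v x) = (norm x * norm x) * (u \<bullet> (M *v u))"
      using inner_scaleR_left[of "norm x" u] by (metis inner_scaleR_right matrix_vector_mult_scaleR mult.assoc)
    then have "x \<bullet> (M *v x) = (x \<bullet> x) * (u \<bullet> (M *v u))"
      by (simp add: dot_square_norm power2_eq_square)
    ultimately show ?thesis by (simp add: vmax mult_left_mono mult.commute)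
  qed simp
  show thesis using vK bound by (intro that) (auto simp: K_def dot_square_norm)
qed

text \<open>Perturbing the maximiser along w = \<mu> v - M v shows 0 \<le> 2 t |w|^2 + O(t^2) for all t,
  which forces w = 0.\<close>
lemma quadratic_form_maximizer_is_eigenvector:
  fixes M :: "real^'n^'n"
  assumes sym: "transpose M = M" and S: "subspace S" and inv: "\<And>x. x \<in> S \<Longrightarrow> M *v x \<in> S"
    and vS: "v \<in> S" and vv: "v \<bullet> v = 1"
    and bound: "\<And>x. x \<in> S \<Longrightarrow> x \<bullet> (M *v x) \<le> (v \<bullet> (M *v v)) * (x \<bullet> x)"
  shows "M *v v = (v \<bullet> (M *v v)) *\<^sub>R v"
proof -
  define \<mu> where "\<mu> = v \<bullet> (M *v v)"
  define w where "w = \<mu> *\<^sub>R v - M *v v"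
  have wS: "w \<in> S" unfolding w_def using S vS inv by (simp add: subspace_diff subspace_scale)
  define c where "c = \<mu> * (w \<bullet> w) - w \<bullet> (M *v w)"
  have "c \<ge> 0" using bound[OF wS] by (simp add: c_def \<mu>_def)
  have Mvw: "v \<bullet> (M *v w) = (M *v v) \<bullet> w" by (rule inner_symmetric_matrix[OF sym])
  have ww: "w \<bullet> w = \<mu> * (v \<bullet> w) - v \<bullet> (M *v w)"
    by (subst (1) w_def) (simp add: Mvw inner_diff_left)
  have perturb: "0 \<le> 2 * t * (w \<bullet> w) + t\<^sup>2 * c" for t
  proof -
    have "v + t *\<^sub>R w \<in> S" using S vS wS by (simp add: subspace_add subspace_scale)
    moreover have "(v + t *\<^sub>R w) \<bullet> (M *v (v + t *\<^sub>R w))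
        = \<mu> + 2 * t * (v \<bullet> (M *v w)) + t\<^sup>2 * (w \<bullet> (M *v w))"
      using Mvw by (simp add: \<mu>_def matrix_vector_right_distrib matrix_vector_mult_scaleR
          inner_add_left inner_add_right inner_commute algebra_simps power2_eq_square)
    moreover have "(v + t *\<^sub>R w) \<bullet> (v + t *\<^sub>R w) = 1 + 2 * t * (v \<bullet> w) + t\<^sup>2 * (w \<bullet> w)"
      using vv by (simp add: inner_add_left inner_add_right inner_commute algebra_simps power2_eq_square)
    ultimately have "\<mu> + 2 * t * (v \<bullet> (M *v w)) + t\<^sup>2 * (w \<bullet> (M *v w))
        \<le> \<mu> * (1 + 2 * t * (v \<bullet> w) + t\<^sup>2 * (w \<bullet> w))"
      using bound by (metis \<mu>_def)
    then show ?thesis unfolding c_def ww by (simp add: algebra_simps)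
  qed
  have "w \<bullet> w = 0"
  proof (rule ccontr)
    assume "w \<bullet> w \<noteq> 0"
    then have pos: "w \<bullet> w > 0" by (metis inner_gt_zero_iff inner_zero_left)
    define t where "t = - (w \<bullet> w) / (c + 1)"
    have "2 * t * (w \<bullet> w) + t\<^sup>2 * c = (w \<bullet> w)\<^sup>2 * (- c - 2) / (c + 1)\<^sup>2"
      using \<open>c \<ge> 0\<close> by (simp add: t_def field_simps power2_eq_square add_nonneg_eq_0_iff)
    also have "\<dots> < 0" using \<open>c \<ge> 0\<close> pos by (intro divide_neg_pos mult_pos_neg) auto
    finally show False using perturb[of t] by linarith
  qed
  then show ?thesis by (simp add: w_def \<mu>_def)
qed

lemma symmetric_matrix_max_eigenvector:
  fixes M :: "real^'n^'n"
  assumes sym: "transpose M = M" and S: "subspace S" and inv: "\<And>x. x \<in> S \<Longrightarrow> M *v x \<in> S"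
    and ne: "S \<noteq> {0}"
  obtains v \<mu> where "v \<in> S" "v \<noteq> 0" "M *v v = \<mu> *\<^sub>R v" "\<And>x. x \<in> S \<Longrightarrow> x \<bullet> (M *v x) \<le> \<mu> * (x \<bullet> x)"
proof -
  obtain v where "v \<in> S" "v \<bullet> v = 1" and bound: "\<And>x. x \<in> S \<Longrightarrow> x \<bullet> (M *v x) \<le> (v \<bullet> (M *v v)) * (x \<bullet> x)"
    using quadratic_form_attains_max_on_sphere[OF S ne] by blast
  moreover from this have "v \<noteq> 0" by auto
  ultimately show thesis
    using quadratic_form_maximizer_is_eigenvector[OF sym S inv] that by blast
qed

definition outer_product :: "real^'n \<Rightarrow> real^'m \<Rightarrow> real^'m^'n" where
  "outer_product u w = (\<chi> i j. u$i * w$j)"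

lemma outer_product_mult_vector: "outer_product u w *v x = (w \<bullet> x) *\<^sub>R u"
  by (simp add: outer_product_def vec_eq_iff matrix_vector_mult_def inner_vec_def
      sum_distrib_left algebra_simps)

lemma transpose_outer_product: "transpose (outer_product u w) = outer_product w u"
  by (simp add: outer_product_def transpose_def vec_eq_iff mult.commute)

text \<open>Vanishing on the orthogonal complement of S lets a root on the hyperplane of S orthogonal to v be
  extended by a multiple of v v^T without interference.\<close>
definition posdef_sqrt_on :: "(real^'n) set \<Rightarrow> real^'n^'n \<Rightarrow> real^'n^'n \<Rightarrow> bool" where
  "posdef_sqrt_on S M P \<longleftrightarrow> transpose P = P \<and> (\<forall>x\<in>S. P *v x \<in> S)
     \<and> (\<forall>x. (\<forall>y\<in>S. y \<bullet> x = 0) \<longrightarrow> P *v x = 0)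
     \<and> (\<forall>x\<in>S. P *v (P *v x) = M *v x) \<and> (\<forall>x\<in>S. x \<noteq> 0 \<longrightarrow> 0 < x \<bullet> (P *v x))"

lemma posdef_sqrt_on_trivial: "posdef_sqrt_on {0} M 0"
  by (simp add: posdef_sqrt_on_def transpose_def vec_eq_iff)

context
  fixes M :: "real^'n^'n" and S :: "(real^'n) set" and v :: "real^'n" and \<mu> :: real
    and P' :: "real^'n^'n"
  assumes S: "subspace S" and vS: "v \<in> S" and v0: "v \<noteq> 0"
    and ev: "M *v v = \<mu> *\<^sub>R v" and \<mu>_pos: "\<mu> > 0"
    and P': "posdef_sqrt_on {x\<in>S. v \<bullet> x = 0} M P'"
begin

private lemma orthogonal_projection_in_hyperplane:
  "x \<in> S \<Longrightarrow> x - ((v \<bullet> x) / (v \<bullet> v)) *\<^sub>R v \<in> {x\<in>S. v \<bullet> x = 0}"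
  using vS S v0 by (simp add: subspace_diff subspace_scale inner_diff_right)

private lemma sqrt_on_hyperplane_kills_normal: "P' *v v = 0"
  using P' by (auto simp: posdef_sqrt_on_def inner_commute)

private lemma sqrt_on_hyperplane_shift: "P' *v (x - a *\<^sub>R v) = P' *v x"
  by (simp add: matrix_vector_mult_diff_distrib matrix_vector_mult_scaleR sqrt_on_hyperplane_kills_normal)

private lemma sqrt_on_hyperplane_maps_into:
  assumes "x \<in> S"
  shows "P' *v x \<in> {x\<in>S. v \<bullet> x = 0}"
proof -
  have "P' *v (x - ((v \<bullet> x) / (v \<bullet> v)) *\<^sub>R v) \<in> {x\<in>S. v \<bullet> x = 0}"
    using P' orthogonal_projection_in_hyperplane[OF assms] unfolding posdef_sqrt_on_def by blast
  then show ?thesis by (simp only: sqrt_on_hyperplane_shift)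
qed

private lemma extended_sqrt_mult_vector:
  "(P' + k *\<^sub>R outer_product v v) *v x = P' *v x + (k * (v \<bullet> x)) *\<^sub>R v"
  by (simp add: matrix_vector_mult_add_rdistrib scaleR_matrix_vector_assoc[symmetric]
      outer_product_mult_vector)

private lemma extended_sqrt_square:
  assumes "x \<in> S"
  defines "P \<equiv> P' + (sqrt \<mu> / (v \<bullet> v)) *\<^sub>R outer_product v v"
  shows "P *v (P *v x) = M *v x"
proof -
  define k where "k = sqrt \<mu> / (v \<bullet> v)"
  define a where "a = (v \<bullet> x) / (v \<bullet> v)"
  have y: "x - a *\<^sub>R v \<in> {x\<in>S. v \<bullet> x = 0}"
    using orthogonal_projection_in_hyperplane[OF assms(1)] by (simp add: a_def)
  have "v \<bullet> (P' *v x) = 0" using sqrt_on_hyperplane_maps_into[OF assms(1)] by simp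
  then have "P *v (P *v x) = P' *v (P' *v x) + (k * (v \<bullet> x) * k * (v \<bullet> v)) *\<^sub>R v"
    by (simp add: P_def extended_sqrt_mult_vector matrix_vector_right_distrib
        matrix_vector_mult_scaleR sqrt_on_hyperplane_kills_normal inner_add_right flip: k_def)
  also have "P' *v (P' *v x) = M *v (x - a *\<^sub>R v)"
    using P' y sqrt_on_hyperplane_shift[of x a] by (auto simp: posdef_sqrt_on_def)
  also have "k * (v \<bullet> x) * k * (v \<bullet> v) = \<mu> * a"
    using v0 \<mu>_pos by (simp add: k_def a_def field_simps power2_eq_square)
  also have "M *v (x - a *\<^sub>R v) + (\<mu> * a) *\<^sub>R v = M *v x"
    by (simp add: matrix_vector_mult_diff_distrib matrix_vector_mult_scaleR ev)
  finally show ?thesis .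
qed

private lemma extended_sqrt_positive:
  assumes "x \<in> S" "x \<noteq> 0"
  shows "0 < x \<bullet> ((P' + (sqrt \<mu> / (v \<bullet> v)) *\<^sub>R outer_product v v) *v x)"
proof -
  define a where "a = (v \<bullet> x) / (v \<bullet> v)"
  define y where "y = x - a *\<^sub>R v"
  have y: "y \<in> {x\<in>S. v \<bullet> x = 0}"
    using orthogonal_projection_in_hyperplane[OF assms(1)] by (simp add: y_def a_def)
  then have "v \<bullet> (P' *v y) = 0" using P' by (simp add: posdef_sqrt_on_def)
  then have "x \<bullet> (P' *v x) = y \<bullet> (P' *v y)"
    using sqrt_on_hyperplane_shift[of x a] by (simp add: y_def inner_diff_left)
  then have eq: "x \<bullet> ((P' + (sqrt \<mu> / (v \<bullet> v)) *\<^sub>R outer_product v v) *v x)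
      = y \<bullet> (P' *v y) + (sqrt \<mu> / (v \<bullet> v)) * (v \<bullet> x)\<^sup>2"
    by (simp add: extended_sqrt_mult_vector inner_add_right inner_commute power2_eq_square)
  have k: "sqrt \<mu> / (v \<bullet> v) > 0" using \<mu>_pos v0 by simp
  show ?thesis
  proof (cases "y = 0")
    case True
    then have "v \<bullet> x \<noteq> 0" using assms(2) by (auto simp: y_def a_def)
    then have "0 < (sqrt \<mu> / (v \<bullet> v)) * (v \<bullet> x)\<^sup>2" using k by (intro mult_pos_pos) auto
    then show ?thesis using eq True by simp
  next
    case False
    then have "y \<bullet> (P' *v y) > 0" using P' y by (simp add: posdef_sqrt_on_def)
    moreover have "0 \<le> (sqrt \<mu> / (v \<bullet> v)) * (v \<bullet> x)\<^sup>2" using k by (intro mult_nonneg_nonneg) auto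
    ultimately show ?thesis using eq by linarith
  qed
qed

lemma posdef_sqrt_on_extend:
  "posdef_sqrt_on S M (P' + (sqrt \<mu> / (v \<bullet> v)) *\<^sub>R outer_product v v)"
  (is "posdef_sqrt_on S M ?P")
  unfolding posdef_sqrt_on_def
proof (intro conjI ballI allI impI)
  show "transpose ?P = ?P"
    using P' transpose_outer_product[of v v]
    by (simp add: posdef_sqrt_on_def transpose_def vec_eq_iff)
  show "?P *v x \<in> S" if "x \<in> S" for x
    using sqrt_on_hyperplane_maps_into[OF that] S vS
    by (simp add: extended_sqrt_mult_vector subspace_add subspace_scale)
  show "?P *v x = 0" if "\<forall>y\<in>S. y \<bullet> x = 0" for x
    using that P' vS by (simp add: extended_sqrt_mult_vector posdef_sqrt_on_def)
  show "?P *v (?P *v x) = M *v x" if "x \<in> S" for x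
    using extended_sqrt_square[OF that] .
  show "0 < x \<bullet> (?P *v x)" if "x \<in> S" "x \<noteq> 0" for x
    using extended_sqrt_positive[OF that] .
qed

end

lemma posdef_sqrt_on_exists:
  fixes M :: "real^'n^'n"
  assumes M: "posdef M" and "subspace S" and "\<And>x. x \<in> S \<Longrightarrow> M *v x \<in> S"
  shows "\<exists>P. posdef_sqrt_on S M P"
  using assms(2,3)
proof (induction "dim S" arbitrary: S rule: less_induct)
  case less
  show ?case
  proof (cases "S = {0}")
    case True
    then show ?thesis using posdef_sqrt_on_trivial by blast
  next
    case False
    have sym: "transpose M = M" using M by (simp add: posdef_def)
    obtain v \<mu> where vS: "v \<in> S" and v0: "v \<noteq> 0" and ev: "M *v v = \<mu> *\<^sub>R v"
      using symmetric_matrix_max_eigenvector[OF sym less.prems False] by blast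
    have "0 < v \<bullet> (M *v v)" using M v0 by (simp add: posdef_def)
    then have "\<mu> > 0" using inner_ge_zero[of v] by (auto simp: ev zero_less_mult_iff)
    define S' where "S' = {x\<in>S. v \<bullet> x = 0}"
    have "S' = S \<inter> {x. v \<bullet> x = 0}" by (auto simp: S'_def)
    then have "subspace S'" using subspace_inter[OF less.prems(1) subspace_hyperplane] by simp
    moreover have "M *v x \<in> S'" if "x \<in> S'" for x
      using that less.prems(2) inner_symmetric_matrix[OF sym, of v x] by (simp add: S'_def ev)
    moreover have "dim S' < dim S"
    proof (rule dim_psubset)
      have "v \<notin> S'" using v0 by (simp add: S'_def)
      moreover have "S' \<subseteq> S" by (auto simp: S'_def)
      ultimately have "S' \<subset> S" using vS by blast
      then show "span S' \<subset> span S" using less.prems(1) \<open>subspace S'\<close> by (metis span_eq_iff)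
    qed
    ultimately obtain P' where "posdef_sqrt_on S' M P'" using less.hyps by blast
    then show ?thesis
      using posdef_sqrt_on_extend[OF less.prems(1) vS v0 ev \<open>\<mu> > 0\<close>] by (auto simp: S'_def)
  qed
qed

lemma posdef_sqrt_exists:
  fixes M :: "real^'n^'n"
  assumes "posdef M"
  obtains P where "posdef P" "P ** P = M"
proof -
  obtain P where P: "posdef_sqrt_on UNIV M P"
    using posdef_sqrt_on_exists[OF assms subspace_UNIV] by blast
  then have "P ** P = M" by (simp add: posdef_sqrt_on_def matrix_eq flip: matrix_vector_mul_assoc)
  with P show thesis by (intro that) (simp_all add: posdef_def posdef_sqrt_on_def)
qed

text \<open>For the top eigenvalue \<mu> of P - Q with eigenvector v, the identity
  P(P - Q) + (P - Q)Q = P^2 - Q^2 = 0 gives \<mu> (v\<bullet>Pv + v\<bullet>Qv) = 0, so \<mu> = 0.\<close>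
lemma posdef_sqrt_difference_nonpos:
  fixes P Q :: "real^'n^'n"
  assumes P: "posdef P" and Q: "posdef Q" and eq: "P ** P = Q ** Q"
  shows "x \<bullet> ((P - Q) *v x) \<le> 0"
proof (cases "(UNIV :: (real^'n) set) = {0}")
  case False
  define D where "D = P - Q"
  have sD: "transpose D = D" using P Q by (simp add: D_def posdef_def transpose_def vec_eq_iff)
  obtain v \<mu> where v0: "v \<noteq> 0" and ev: "D *v v = \<mu> *\<^sub>R v"
    and bound: "\<And>x. x \<bullet> (D *v x) \<le> \<mu> * (x \<bullet> x)"
    using symmetric_matrix_max_eigenvector[OF sD subspace_UNIV UNIV_I False] by auto
  have "P *v (P *v v) = Q *v (Q *v v)" using eq by (simp add: matrix_vector_mul_assoc)
  then have "P *v (D *v v) + D *v (Q *v v) = 0"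
    by (simp add: D_def matrix_vector_mult_diff_rdistrib matrix_vector_mult_diff_distrib)
  then have "0 = v \<bullet> (P *v (D *v v)) + v \<bullet> (D *v (Q *v v))"
    by (metis inner_add_right inner_zero_right)
  also have "v \<bullet> (D *v (Q *v v)) = \<mu> * (v \<bullet> (Q *v v))"
    by (simp add: inner_symmetric_matrix[OF sD] ev)
  also have "v \<bullet> (P *v (D *v v)) = \<mu> * (v \<bullet> (P *v v))"
    by (simp add: ev matrix_vector_mult_scaleR)
  finally have "\<mu> * (v \<bullet> (P *v v) + v \<bullet> (Q *v v)) = 0" by (simp add: algebra_simps)
  moreover have "v \<bullet> (P *v v) + v \<bullet> (Q *v v) > 0" using P Q v0 by (simp add: posdef_def add_pos_pos)
  ultimately have "\<mu> = 0" by simp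
  then show ?thesis using bound by (simp add: D_def)
next
  case True
  then have "x = 0" by blast
  then show ?thesis by simp
qed

lemma posdef_sqrt_unique:
  fixes P Q :: "real^'n^'n"
  assumes P: "posdef P" and Q: "posdef Q" and eq: "P ** P = Q ** Q"
  shows "P = Q"
proof -
  have "P - Q = 0"
  proof (rule symmetric_matrix_eq_0)
    show "transpose (P - Q) = P - Q"
      using P Q by (simp add: posdef_def transpose_def vec_eq_iff)
    show "x \<bullet> ((P - Q) *v x) = 0" for x
      using posdef_sqrt_difference_nonpos[OF P Q eq, of x]
        posdef_sqrt_difference_nonpos[OF Q P eq[symmetric], of x]
      by (simp add: matrix_vector_mult_diff_rdistrib inner_diff_right)
  qed
  then show ?thesis by simp
qed

lemma posdef_invertible:
  assumes "posdef P"
  shows "invertible P"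
proof -
  have "\<forall>x. P *v x = 0 \<longrightarrow> x = 0"
    using assms by (metis posdef_def inner_zero_right less_irrefl)
  then show ?thesis using matrix_left_invertible_ker invertible_left_inverse by blast
qed

lemma posdef_transpose_mult_self:
  fixes A :: "real^'n^'n"
  assumes "invertible A"
  shows "posdef (transpose A ** A)"
  unfolding posdef_def
proof (intro conjI allI impI)
  show "transpose (transpose A ** A) = transpose A ** A" by (simp add: matrix_transpose_mul)
  fix x :: "real^'n"
  assume "x \<noteq> 0"
  then have "A *v x \<noteq> 0"
    using inj_matrix_vector_mult[OF assms] by (metis injD matrix_vector_mult_0_right)
  moreover have "x \<bullet> ((transpose A ** A) *v x) = (A *v x) \<bullet> (A *v x)"
    unfolding matrix_vector_mul_assoc[symmetric] by (rule inner_transpose_matrix)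
  ultimately show "0 < x \<bullet> ((transpose A ** A) *v x)" by simp
qed

lemma posdef_orthogonal_conj:
  fixes P H :: "real^'n^'n"
  assumes P: "posdef P" and H: "orthogonal_matrix H"
  shows "posdef (transpose H ** P ** H)"
  unfolding posdef_def
proof (intro conjI allI impI)
  show "transpose (transpose H ** P ** H) = transpose H ** P ** H"
    using P by (simp add: posdef_def matrix_transpose_mul matrix_mul_assoc)
  fix x :: "real^'n"
  assume "x \<noteq> 0"
  then have "H *v x \<noteq> 0"
    using inj_matrix_vector_mult[OF orthogonal_matrix_invertible[OF H]]
    by (metis injD matrix_vector_mult_0_right)
  moreover have "x \<bullet> ((transpose H ** P ** H) *v x) = (H *v x) \<bullet> (P *v (H *v x))"
    unfolding matrix_vector_mul_assoc[symmetric] by (rule inner_transpose_matrix)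
  ultimately show "0 < x \<bullet> ((transpose H ** P ** H) *v x)" using P by (simp add: posdef_def)
qed

lemma polar_decomposition:
  fixes A :: "real^'n^'n"
  assumes "invertible A"
  obtains Q P where "orthogonal_matrix Q" "posdef P" "A = Q ** P"
proof -
  obtain P where P: "posdef P" and PP: "P ** P = transpose A ** A"
    using posdef_sqrt_exists[OF posdef_transpose_mult_self[OF assms]] by blast
  define Pi where "Pi = matrix_inv P"
  have "invertible P" using posdef_invertible[OF P] .
  then have PPi: "P ** Pi = mat 1" and PiP: "Pi ** P = mat 1"
    by (simp_all add: Pi_def matrix_inv_right matrix_inv_left)
  have "transpose Pi = Pi"
    using matrix_inv_transpose[OF \<open>invertible P\<close>] P by (simp add: Pi_def posdef_def)
  then have "transpose (A ** Pi) ** (A ** Pi) = Pi ** (transpose A ** A) ** Pi"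
    by (simp add: matrix_transpose_mul matrix_mul_assoc)
  also have "\<dots> = (Pi ** P) ** (P ** Pi)" by (simp add: PP[symmetric] matrix_mul_assoc)
  finally have "orthogonal_matrix (A ** Pi)" by (simp add: orthogonal_matrix PPi PiP)
  moreover have "A = (A ** Pi) ** P" by (metis PiP matrix_mul_assoc matrix_mul_rid)
  ultimately show thesis using P that by blast
qed

lemma orthogonal_conj_imp_gram_invariant:
  fixes A H :: "real^'n^'n"
  assumes A: "invertible A" and "orthogonal_matrix (A ** H ** matrix_inv A)"
  shows "transpose H ** (transpose A ** A) ** H = transpose A ** A"
proof -
  define Ai where "Ai = matrix_inv A"
  define X where "X = transpose H ** (transpose A ** A) ** H"
  have AiA: "Ai ** A = mat 1" by (simp add: Ai_def matrix_inv_left A)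
  then have tAAi: "transpose A ** transpose Ai = mat 1"
    by (metis matrix_transpose_mul transpose_mat)
  have B: "transpose Ai ** X ** Ai = mat 1"
    using assms(2) by (simp add: orthogonal_matrix matrix_transpose_mul matrix_mul_assoc X_def Ai_def)
  have "X = (transpose A ** transpose Ai) ** X ** (Ai ** A)" by (simp add: tAAi AiA)
  also have "\<dots> = transpose A ** (transpose Ai ** X ** Ai) ** A" by (simp add: matrix_mul_assoc)
  also have "\<dots> = transpose A ** A" by (simp add: B)
  finally show ?thesis by (simp add: X_def)
qed

text \<open>The conjugate H^T P H is again a positive definite square root of P^2, so it equals P.\<close>
lemma posdef_commute_if_square_commutes:
  fixes P H :: "real^'n^'n"
  assumes P: "posdef P" and H: "orthogonal_matrix H"
    and inv: "transpose H ** (P ** P) ** H = P ** P"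
  shows "P ** H = H ** P"
proof -
  have HH: "H ** transpose H = mat 1" using H by (simp add: orthogonal_matrix_def)
  have "(transpose H ** P ** H) ** (transpose H ** P ** H) = transpose H ** P ** (H ** transpose H) ** P ** H"
    by (simp add: matrix_mul_assoc)
  also have "\<dots> = transpose H ** (P ** P) ** H" by (simp add: HH matrix_mul_assoc)
  finally have "transpose H ** P ** H = P"
    using posdef_sqrt_unique[OF posdef_orthogonal_conj[OF P H] P] inv by simp
  have "P ** H = (H ** transpose H) ** P ** H" by (simp add: HH)
  also have "\<dots> = H ** (transpose H ** P ** H)" by (simp add: matrix_mul_assoc)
  also have "\<dots> = H ** P" by (simp add: \<open>transpose H ** P ** H = P\<close>)
  finally show ?thesis .
qed

lemma orthogonal_conj_by_orthogonal_mult_centralizing: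
  fixes Q P H :: "real^'n^'n"
  assumes Q: "orthogonal_matrix Q" and P: "invertible P" and PH: "P ** H = H ** P"
    and H: "orthogonal_matrix H"
  shows "orthogonal_matrix ((Q ** P) ** H ** matrix_inv (Q ** P))"
proof -
  have "(Q ** P) ** H ** matrix_inv (Q ** P) = Q ** (P ** H) ** matrix_inv P ** transpose Q"
    by (simp add: matrix_inv_mult orthogonal_matrix_invertible orthogonal_matrix_inv Q P
        matrix_mul_assoc)
  also have "\<dots> = Q ** H ** (P ** matrix_inv P) ** transpose Q"
    by (simp add: PH matrix_mul_assoc)
  also have "\<dots> = Q ** H ** transpose Q"
    by (simp add: matrix_inv_right P)
  finally show ?thesis by (simp add: orthogonal_matrix_mul Q H)
qed

lemma orthogonalizing_conjugators_eq:
  fixes G :: "(real^'n^'n) set"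
  assumes G: "\<And>H. H \<in> G \<Longrightarrow> orthogonal_matrix H"
  shows "{A. invertible A \<and> (\<forall>H\<in>G. orthogonal_matrix (A ** H ** matrix_inv A))}
    = {Q ** P | Q P. orthogonal_matrix Q \<and> P \<in> GL_centralizer G}"
proof (intro equalityI subsetI)
  fix A :: "real^'n^'n"
  assume "A \<in> {A. invertible A \<and> (\<forall>H\<in>G. orthogonal_matrix (A ** H ** matrix_inv A))}"
  then have A: "invertible A" and conj: "\<And>H. H \<in> G \<Longrightarrow> orthogonal_matrix (A ** H ** matrix_inv A)"
    by auto
  obtain Q P where Q: "orthogonal_matrix Q" and P: "posdef P" and QP: "A = Q ** P"
    using polar_decomposition[OF A] .
  have "transpose A ** A = P ** (transpose Q ** Q) ** P"
    using P by (simp add: QP matrix_transpose_mul matrix_mul_assoc posdef_def)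
  also have "\<dots> = P ** P" using Q[unfolded orthogonal_matrix] by simp
  finally have "transpose A ** A = P ** P" .
  then have "P ** H = H ** P" if "H \<in> G" for H
    using posdef_commute_if_square_commutes[OF P G[OF that]]
      orthogonal_conj_imp_gram_invariant[OF A conj[OF that]] by simp
  then show "A \<in> {Q ** P | Q P. orthogonal_matrix Q \<and> P \<in> GL_centralizer G}"
    using Q QP posdef_invertible[OF P] by (auto simp: GL_centralizer_def)
next
  fix A :: "real^'n^'n"
  assume "A \<in> {Q ** P | Q P. orthogonal_matrix Q \<and> P \<in> GL_centralizer G}"
  then obtain Q P where "A = Q ** P" and Q: "orthogonal_matrix Q" and P: "invertible P"
    and PH: "\<And>H. H \<in> G \<Longrightarrow> P ** H = H ** P"
    by (auto simp: GL_centralizer_def)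
  moreover have "invertible (Q ** P)"
    using Q P by (simp add: invertible_mult orthogonal_matrix_invertible)
  ultimately show "A \<in> {A. invertible A \<and> (\<forall>H\<in>G. orthogonal_matrix (A ** H ** matrix_inv A))}"
    using orthogonal_conj_by_orthogonal_mult_centralizing[OF Q P PH G] by auto
qed

theorem mainTheorem10:
  fixes \<pi> :: "'n::finite iso set"
  assumes "crystallographic \<pi>"
  shows "conj_orth \<pi> =
    {Q ** P | Q P. orthogonal_matrix Q \<and> P \<in> GL_centralizer (holonomy \<pi>)}"
proof -
  have "\<And>H. H \<in> holonomy \<pi> \<Longrightarrow> orthogonal_matrix H"
    using assms by (auto simp: crystallographic_def iso_subgroup_def holonomy_def Iso_def)
  then show ?thesis unfolding conj_orth_def by (rule orthogonalizing_conjugators_eq)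
qed

end
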